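(* For all graphs $F$ and $G$ with $F\to G$, \[ \mathsf{HDE}(F,G) \;\le\; \min_{q \in \mathcal Q(G)}\; \max_{\varphi \in \mathsf{Hom}(F,G)}\; \sum_{A\subseteq V_G} q(A)\cdot \mathsf{CC}\big(F|_{\varphi^{-1}(A)}\big). \]
   Context: Graphs are finite directed graphs $G=(V_G,E_G)$ with $V_G$ nonempty finite and $E_G\subseteq V_G\times V_G$ (loops allowed). A homomorphism $\varphi:F\to G$ is a map $V_F\to V_G$ with $(\varphi(a),\varphi(b))\in E_G$ for all $(a,b)\in E_F$; $\mathsf{Hom}(F,G)$ is the set of these, $\hom(F,G)$ its size, $F\to G$ means $\hom(F,G)\ge 1$. For $F\to G$, $\mathsf{HDE}(F,G)=\sup\{c\in\mathbb R:\hom(F,T)\ge\hom(G,T)^c\text{ for all graphs }T\}$. For $A\subseteq V_G$, $G|_A$ is the induced subgraph on $A$; $\mathsf{CC}(H)$ is the number of connected components of the underlying undirected graph of $H$ (edges ignoring direction), with $\mathsf{CC}(G|_\emptyset)=0$. $\mathcal Q(G)$ is the set of functions $q:\wp(V_G)\to\mathbb R$ with $q(\emptyset)=0$, $q(A)\ge0$ for all $A$, and $\sum_{A\subseteq V_G} q(A)\,\mathsf{CC}(G|_A)=1$. *)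

theory Defs
  imports Complex_Main "HOL-Library.FuncSet"
begin

text \<open>A directed graph is a pair (vertex set, edge set); loops allowed.\<close>
type_synonym 'a graph = "'a set \<times> ('a \<times> 'a) set"

abbreviation verts :: "'a graph \<Rightarrow> 'a set" where "verts G \<equiv> fst G"
abbreviation edges :: "'a graph \<Rightarrow> ('a \<times> 'a) set" where "edges G \<equiv> snd G"

definition wf_graph :: "'a graph \<Rightarrow> bool" where
  "wf_graph G \<longleftrightarrow> finite (verts G) \<and> verts G \<noteq> {} \<and> edges G \<subseteq> verts G \<times> verts G"

text \<open>Homomorphisms, as extensional maps V_F -> V_G (so distinct maps on V_F are counted once).\<close>
definition Homs :: "'a graph \<Rightarrow> 'b graph \<Rightarrow> ('a \<Rightarrow> 'b) set" where
  "Homs F G = {\<phi> \<in> verts F \<rightarrow>\<^sub>E verts G. \<forall>(a, b) \<in> edges F. (\<phi> a, \<phi> b) \<in> edges G}"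

definition hom :: "'a graph \<Rightarrow> 'b graph \<Rightarrow> nat" where
  "hom F G = card (Homs F G)"

text \<open>Homomorphism domination exponent; the target graphs T range over all finite
  graphs, represented (up to isomorphism) with vertices in nat.\<close>
definition HDE :: "'a graph \<Rightarrow> 'b graph \<Rightarrow> real" where
  "HDE F G = Sup {c :: real. \<forall>T :: nat graph. wf_graph T \<longrightarrow>
                     real (hom F T) \<ge> real (hom G T) powr c}"

definition induced :: "'a graph \<Rightarrow> 'a set \<Rightarrow> 'a graph" where
  "induced G A = (A, edges G \<inter> (A \<times> A))"

definition CC :: "'a graph \<Rightarrow> nat" where
  "CC H = card (verts H // ((edges H \<union> (edges H)\<inverse>)\<^sup>*))"

definition Qset :: "'a graph \<Rightarrow> ('a set \<Rightarrow> real) set" where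
  "Qset G = {q. q {} = 0 \<and> (\<forall>A \<in> Pow (verts G). q A \<ge> 0) \<and>
                (\<Sum>A \<in> Pow (verts G). q A * real (CC (induced G A))) = 1}"

end

theory Submission
  imports Defs
begin

(* Fix a weight function q in Q(G) and an admissible exponent c, i.e.
   hom(F,T) >= hom(G,T)^c for every target graph T.  For sizes n(A), A a set of
   vertices of G, the blow-up G^(n) has vertices (v, x) where x assigns to each
   A containing v a label below n(A); two such vertices are adjacent iff their
   G-vertices are and their labels agree on every A containing both.  For a
   homomorphism phi : H -> G, the homomorphisms H -> G^(n) lying over phi are
   exactly the labellings that are constant on each connected component of
   H|phi^-1(A), so there are prod_A n(A)^CC(H|phi^-1(A)) of them.  Hence
     hom(G, G^(n)) >= prod_A n(A)^CC(G|A)   (lifts of the identity) and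
     hom(F, G^(n)) <= sum_phi prod_A n(A)^CC(F|phi^-1(A)).
   Taking n(A) = 2^floor(k q(A)) makes the first exponent >= k - const (since
   sum_A q(A) CC(G|A) = 1) and each exponent in the second at most k times the
   max over phi; comparing the growth in k forces c to be at most that max. *)

lemma finite_Homs:
  assumes "finite (verts F)" "finite (verts T)" shows "finite (Homs F T)"
proof (rule finite_subset)
  show "Homs F T \<subseteq> verts F \<rightarrow>\<^sub>E verts T" unfolding Homs_def by blast
qed (use assms in \<open>simp add: finite_PiE\<close>)

lemma hom_ge_1_iff:
  assumes "wf_graph F" "wf_graph T" shows "hom F T \<ge> 1 \<longleftrightarrow> Homs F T \<noteq> {}"
  using finite_Homs[of F T] assms by (simp add: hom_def wf_graph_def Suc_le_eq card_gt_0_iff)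

(* Homomorphisms compose (restricted to the vertex set, to stay extensional). *)
lemma Homs_comp:
  assumes "wf_graph F" "\<phi> \<in> Homs F G" "\<psi> \<in> Homs G T"
  shows "(\<lambda>a\<in>verts F. \<psi> (\<phi> a)) \<in> Homs F T"
  using assms unfolding Homs_def wf_graph_def by (fastforce simp: PiE_iff)

(* Renaming the vertices of a graph along a map; used to move a target graph to vertex type nat,
   which is the type over which HDE quantifies. *)
definition relabel :: "('c \<Rightarrow> 'd) \<Rightarrow> 'c graph \<Rightarrow> 'd graph" where
  "relabel h T = (h ` verts T, map_prod h h ` edges T)"

lemma wf_relabel: "wf_graph T \<Longrightarrow> wf_graph (relabel h T)"
  unfolding wf_graph_def relabel_def by (auto simp: map_prod_def)

lemma bij_Homs_relabel:
  assumes wfX: "wf_graph X" and wfT: "wf_graph T" and inj: "inj_on h (verts T)"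
  shows "bij_betw (\<lambda>\<chi>. \<lambda>a\<in>verts X. h (\<chi> a)) (Homs X T) (Homs X (relabel h T))"
proof (rule bij_betw_byWitness[where f' = "\<lambda>\<psi>. \<lambda>a\<in>verts X. inv_into (verts T) h (\<psi> a)"])
  have EX: "edges X \<subseteq> verts X \<times> verts X" and ET: "edges T \<subseteq> verts T \<times> verts T"
    using wfX wfT by (auto simp: wf_graph_def)
  show "\<forall>\<chi>\<in>Homs X T. (\<lambda>a\<in>verts X. inv_into (verts T) h ((\<lambda>a\<in>verts X. h (\<chi> a)) a)) = \<chi>"
    using inj unfolding Homs_def by (fastforce simp: PiE_iff extensional_def)
  show "\<forall>\<psi>\<in>Homs X (relabel h T). (\<lambda>a\<in>verts X. h ((\<lambda>a\<in>verts X. inv_into (verts T) h (\<psi> a)) a)) = \<psi>"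
    unfolding Homs_def relabel_def by (fastforce simp: PiE_iff extensional_def f_inv_into_f)
  show "(\<lambda>\<chi>. \<lambda>a\<in>verts X. h (\<chi> a)) ` Homs X T \<subseteq> Homs X (relabel h T)"
    using EX unfolding Homs_def relabel_def by (fastforce simp: PiE_iff)
  show "(\<lambda>\<psi>. \<lambda>a\<in>verts X. inv_into (verts T) h (\<psi> a)) ` Homs X (relabel h T) \<subseteq> Homs X T"
    using EX ET inj unfolding Homs_def relabel_def by (fastforce simp: PiE_iff inv_into_f_f)
qed

lemma hom_relabel:
  assumes "wf_graph X" "wf_graph T" "inj_on h (verts T)"
  shows "hom X (relabel h T) = hom X T"
  using bij_Homs_relabel[OF assms] by (simp add: hom_def bij_betw_same_card)

definition comp_rel :: "'a graph \<Rightarrow> 'a set \<Rightarrow> ('a \<times> 'a) set" where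
  "comp_rel H A = ((edges H \<inter> A \<times> A) \<union> (edges H \<inter> A \<times> A)\<inverse>)\<^sup>*"

lemma CC_induced: "CC (induced H A) = card (A // comp_rel H A)"
  by (simp add: CC_def induced_def comp_rel_def)

lemma equiv_comp_rel: "equiv UNIV (comp_rel H A)"
  unfolding comp_rel_def equiv_def
  by (auto simp: refl_rtrancl sym_rtrancl sym_Un_converse trans_rtrancl)

lemma comp_rel_stays: "(a, b) \<in> comp_rel H A \<Longrightarrow> a \<in> A \<Longrightarrow> b \<in> A"
  unfolding comp_rel_def by (induction rule: rtrancl_induct) auto

lemma comp_rel_const:
  assumes "(a, b) \<in> comp_rel H A" "\<And>x y. (x, y) \<in> edges H \<Longrightarrow> x \<in> A \<Longrightarrow> y \<in> A \<Longrightarrow> f x = f y"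
  shows "f a = f b"
  using assms(1) unfolding comp_rel_def by (induction rule: rtrancl_induct) (auto dest: assms(2))

lemma comp_rel_edge_class:
  assumes "(a, b) \<in> edges H" "a \<in> A" "b \<in> A"
  shows "comp_rel H A `` {a} = comp_rel H A `` {b}"
  using assms equiv_comp_rel[of H A] unfolding comp_rel_def
  by (intro equiv_class_eq) blast+

lemma component_rep:
  assumes "K \<in> A // comp_rel H A"
  shows "(SOME a. a \<in> K) \<in> A" "K = comp_rel H A `` {SOME a. a \<in> K}"
proof -
  obtain a where a: "a \<in> A" "K = comp_rel H A `` {a}" using assms by (rule quotientE)
  then have "(a, SOME a. a \<in> K) \<in> comp_rel H A"
    using someI[of "\<lambda>b. b \<in> K" a] by (simp add: comp_rel_def)
  then show "(SOME a. a \<in> K) \<in> A" "K = comp_rel H A `` {SOME a. a \<in> K}"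
    using a comp_rel_stays equiv_class_eq[OF equiv_comp_rel] by metis+
qed

lemma finite_components: "finite A \<Longrightarrow> finite (A // comp_rel H A)"
  unfolding quotient_def by auto

(* The blow-up G^(n): a vertex v carries a label below n(A) for every A containing v (and 0
   elsewhere); adjacent vertices must have adjacent G-vertices and equal labels on all common A. *)
definition labels :: "'b graph \<Rightarrow> ('b set \<Rightarrow> nat) \<Rightarrow> 'b \<Rightarrow> ('b set \<Rightarrow> nat) set" where
  "labels G n v = (\<Pi>\<^sub>E A\<in>Pow (verts G). if v \<in> A then {..<n A} else {0})"

definition blow :: "'b graph \<Rightarrow> ('b set \<Rightarrow> nat) \<Rightarrow> ('b \<times> ('b set \<Rightarrow> nat)) graph" where
  "blow G n = (SIGMA v:verts G. labels G n v,
     {((v, x), (w, y)). x \<in> labels G n v \<and> y \<in> labels G n w \<and> (v, w) \<in> edges G \<and>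
        (\<forall>A. v \<in> A \<and> w \<in> A \<longrightarrow> x A = y A)})"

lemma verts_blow: "verts (blow G n) = (SIGMA v:verts G. labels G n v)"
  by (simp add: blow_def)

lemma edges_blow:
  "((v, x), (w, y)) \<in> edges (blow G n) \<longleftrightarrow> x \<in> labels G n v \<and> y \<in> labels G n w \<and>
     (v, w) \<in> edges G \<and> (\<forall>A. v \<in> A \<and> w \<in> A \<longrightarrow> x A = y A)"
  by (simp add: blow_def)

lemma finite_blow: "finite (verts G) \<Longrightarrow> finite (verts (blow G n))"
  unfolding blow_def labels_def by (auto intro!: finite_PiE)

lemma wf_blow:
  assumes "wf_graph G" "\<And>A. n A > 0" shows "wf_graph (blow G n)"
proof -
  obtain v where "v \<in> verts G" using assms(1) by (auto simp: wf_graph_def)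
  then have "(v, \<lambda>A\<in>Pow (verts G). 0) \<in> verts (blow G n)"
    using assms(2) by (auto simp: blow_def labels_def)
  then show ?thesis
    using assms(1) finite_blow[of G n] by (auto simp: wf_graph_def blow_def)
qed

abbreviation preim :: "'a graph \<Rightarrow> ('a \<Rightarrow> 'b) \<Rightarrow> 'b set \<Rightarrow> 'a set" where
  "preim H \<phi> B \<equiv> {a \<in> verts H. \<phi> a \<in> B}"

abbreviation pieces :: "'a graph \<Rightarrow> ('a \<Rightarrow> 'b) \<Rightarrow> 'b set \<Rightarrow> 'a set set" where
  "pieces H \<phi> B \<equiv> preim H \<phi> B // comp_rel H (preim H \<phi> B)"

abbreviation piece :: "'a graph \<Rightarrow> ('a \<Rightarrow> 'b) \<Rightarrow> 'b set \<Rightarrow> 'a \<Rightarrow> 'a set" where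
  "piece H \<phi> B a \<equiv> comp_rel H (preim H \<phi> B) `` {a}"

(* Homomorphisms H -> G^(n) lying over phi, and their combinatorial description: one label
   below n(B) per component of H|phi^-1(B).  lift and unlift translate between the two. *)
definition lifts :: "'a graph \<Rightarrow> 'b graph \<Rightarrow> ('b set \<Rightarrow> nat) \<Rightarrow> ('a \<Rightarrow> 'b)
    \<Rightarrow> ('a \<Rightarrow> 'b \<times> ('b set \<Rightarrow> nat)) set" where
  "lifts H G n \<phi> = {\<chi> \<in> Homs H (blow G n). \<forall>a\<in>verts H. fst (\<chi> a) = \<phi> a}"

definition labelings :: "'a graph \<Rightarrow> 'b graph \<Rightarrow> ('b set \<Rightarrow> nat) \<Rightarrow> ('a \<Rightarrow> 'b)
    \<Rightarrow> ('b set \<Rightarrow> 'a set \<Rightarrow> nat) set" where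
  "labelings H G n \<phi> = (\<Pi>\<^sub>E B\<in>Pow (verts G). \<Pi>\<^sub>E K\<in>pieces H \<phi> B. {..<n B})"

definition lift :: "'a graph \<Rightarrow> 'b graph \<Rightarrow> ('a \<Rightarrow> 'b) \<Rightarrow> ('b set \<Rightarrow> 'a set \<Rightarrow> nat)
    \<Rightarrow> 'a \<Rightarrow> 'b \<times> ('b set \<Rightarrow> nat)" where
  "lift H G \<phi> s = (\<lambda>a\<in>verts H.
     (\<phi> a, \<lambda>B\<in>Pow (verts G). if \<phi> a \<in> B then s B (piece H \<phi> B a) else 0))"

definition unlift :: "'a graph \<Rightarrow> 'b graph \<Rightarrow> ('a \<Rightarrow> 'b) \<Rightarrow> ('a \<Rightarrow> 'b \<times> ('b set \<Rightarrow> nat))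
    \<Rightarrow> 'b set \<Rightarrow> 'a set \<Rightarrow> nat" where
  "unlift H G \<phi> \<chi> = (\<lambda>B\<in>Pow (verts G). \<lambda>K\<in>pieces H \<phi> B. snd (\<chi> (SOME a. a \<in> K)) B)"

lemma lift_mem_lifts:
  assumes wfH: "wf_graph H" and hom: "\<phi> \<in> Homs H G" and s: "s \<in> labelings H G n \<phi>"
  shows "lift H G \<phi> s \<in> lifts H G n \<phi>"
proof -
  have EH: "edges H \<subseteq> verts H \<times> verts H" using wfH by (simp add: wf_graph_def)
  have lab: "snd (lift H G \<phi> s a) \<in> labels G n (\<phi> a)" if "a \<in> verts H" for a
    using that s quotientI[of a "preim H \<phi> _"]
    by (auto simp: lift_def labels_def labelings_def PiE_iff)
  have edge: "snd (lift H G \<phi> s a) A = snd (lift H G \<phi> s b) A"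
    if "(a, b) \<in> edges H" "\<phi> a \<in> A" "\<phi> b \<in> A" for a b A
    using that EH comp_rel_edge_class[of a b H "preim H \<phi> A"] by (auto simp: lift_def)
  show ?thesis
    using hom lab edge EH unfolding lifts_def Homs_def
    by (fastforce simp: blow_def lift_def PiE_iff)
qed

lemma lifts_label:
  assumes "\<chi> \<in> lifts H G n \<phi>" "a \<in> verts H"
  shows "\<chi> a = (\<phi> a, snd (\<chi> a))" "snd (\<chi> a) \<in> labels G n (\<phi> a)"
proof -
  have "\<chi> a \<in> (SIGMA v:verts G. labels G n v)" "fst (\<chi> a) = \<phi> a"
    using assms unfolding lifts_def Homs_def blow_def by auto
  then show "\<chi> a = (\<phi> a, snd (\<chi> a))" "snd (\<chi> a) \<in> labels G n (\<phi> a)"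
    by (auto simp: prod_eq_iff)
qed

lemma lifts_label_const:
  assumes "\<chi> \<in> lifts H G n \<phi>" "(a, b) \<in> comp_rel H (preim H \<phi> B)"
  shows "snd (\<chi> a) B = snd (\<chi> b) B"
  using assms(2)
proof (rule comp_rel_const)
  fix x y assume xy: "(x, y) \<in> edges H" "x \<in> preim H \<phi> B" "y \<in> preim H \<phi> B"
  then have "(\<chi> x, \<chi> y) \<in> edges (blow G n)"
    using assms(1) unfolding lifts_def Homs_def by blast
  then have "((\<phi> x, snd (\<chi> x)), (\<phi> y, snd (\<chi> y))) \<in> edges (blow G n)"
    using lifts_label(1)[OF assms(1)] xy by auto
  then show "snd (\<chi> x) B = snd (\<chi> y) B"
    using xy by (simp add: edges_blow)
qed

lemma unlift_lift:
  assumes "s \<in> labelings H G n \<phi>" shows "unlift H G \<phi> (lift H G \<phi> s) = s"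
proof (rule extensionalityI)
  show "s \<in> extensional (Pow (verts G))" using assms by (simp add: labelings_def PiE_iff)
  fix B assume B: "B \<in> Pow (verts G)"
  show "unlift H G \<phi> (lift H G \<phi> s) B = s B"
  proof (rule extensionalityI)
    show "s B \<in> extensional (pieces H \<phi> B)" using assms B by (simp add: labelings_def PiE_iff)
    fix K assume K: "K \<in> pieces H \<phi> B"
    show "unlift H G \<phi> (lift H G \<phi> s) B K = s B K"
      using component_rep[OF K] B K by (simp add: unlift_def lift_def)
  qed (use B in \<open>simp add: unlift_def\<close>)
qed (simp add: unlift_def)

lemma unlift_mem:
  assumes "\<chi> \<in> lifts H G n \<phi>" shows "unlift H G \<phi> \<chi> \<in> labelings H G n \<phi>"
proof -
  have "snd (\<chi> (SOME a. a \<in> K)) B \<in> {..<n B}"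
    if B: "B \<in> Pow (verts G)" and K: "K \<in> pieces H \<phi> B" for B K
  proof -
    let ?a = "SOME a. a \<in> K"
    have a: "?a \<in> verts H" "\<phi> ?a \<in> B" using component_rep(1)[OF K] by auto
    then show ?thesis
      using PiE_mem[OF lifts_label(2)[OF assms a(1), unfolded labels_def] B] by simp
  qed
  then show ?thesis unfolding unlift_def labelings_def by auto
qed

lemma lift_unlift:
  assumes "\<chi> \<in> lifts H G n \<phi>" shows "lift H G \<phi> (unlift H G \<phi> \<chi>) = \<chi>"
proof (rule extensionalityI)
  show "\<chi> \<in> extensional (verts H)" using assms by (simp add: lifts_def Homs_def PiE_def)
  fix a assume a: "a \<in> verts H"
  have lab: "snd (\<chi> a) \<in> labels G n (\<phi> a)" by (rule lifts_label(2)[OF assms a])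
  have "(\<lambda>B\<in>Pow (verts G). if \<phi> a \<in> B then unlift H G \<phi> \<chi> B (piece H \<phi> B a) else 0)
      = snd (\<chi> a)"
  proof (rule extensionalityI)
    show "snd (\<chi> a) \<in> extensional (Pow (verts G))" using lab by (simp add: labels_def PiE_iff)
    fix B assume B: "B \<in> Pow (verts G)"
    show "(\<lambda>B\<in>Pow (verts G). if \<phi> a \<in> B then unlift H G \<phi> \<chi> B (piece H \<phi> B a) else 0) B
        = snd (\<chi> a) B"
    proof (cases "\<phi> a \<in> B")
      case True
      then have K: "piece H \<phi> B a \<in> pieces H \<phi> B" using a by (intro quotientI) simp
      have "a \<in> piece H \<phi> B a" by (simp add: comp_rel_def)
      then have "(SOME b. b \<in> piece H \<phi> B a) \<in> piece H \<phi> B a" by (rule someI)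
      then have "(a, SOME b. b \<in> piece H \<phi> B a) \<in> comp_rel H (preim H \<phi> B)" by simp
      then have "snd (\<chi> a) B = snd (\<chi> (SOME b. b \<in> piece H \<phi> B a)) B"
        by (rule lifts_label_const[OF assms])
      then show ?thesis using True B K by (simp add: unlift_def)
    next
      case False
      then show ?thesis using PiE_mem[OF lab[unfolded labels_def] B] B by simp
    qed
  qed simp
  then show "lift H G \<phi> (unlift H G \<phi> \<chi>) a = \<chi> a"
    using a lifts_label(1)[OF assms a] by (simp add: lift_def)
qed (simp add: lift_def)

lemma card_lifts:
  assumes wfH: "wf_graph H" and hom: "\<phi> \<in> Homs H G" and finG: "finite (verts G)"
  shows "card (lifts H G n \<phi>) = (\<Prod>B\<in>Pow (verts G). n B ^ CC (induced H (preim H \<phi> B)))"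
proof -
  have "bij_betw (lift H G \<phi>) (labelings H G n \<phi>) (lifts H G n \<phi>)"
    by (rule bij_betw_byWitness[where f' = "unlift H G \<phi>"])
       (auto simp: unlift_lift lift_unlift lift_mem_lifts[OF wfH hom] unlift_mem)
  then have "card (lifts H G n \<phi>) = card (labelings H G n \<phi>)"
    by (simp add: bij_betw_same_card)
  also have "\<dots> = (\<Prod>B\<in>Pow (verts G). n B ^ CC (induced H (preim H \<phi> B)))"
    using finG wfH unfolding labelings_def
    by (simp add: card_PiE finite_components wf_graph_def CC_induced)
  finally show ?thesis .
qed

(* Lower bound: the lifts of the identity of G. *)
lemma hom_blow_lower:
  assumes wf: "wf_graph G"
  shows "(\<Prod>B\<in>Pow (verts G). n B ^ CC (induced G B)) \<le> hom G (blow G n)"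
proof -
  let ?id = "\<lambda>v\<in>verts G. v"
  have id: "?id \<in> Homs G G" using wf by (auto simp: Homs_def wf_graph_def)
  have fin: "finite (verts G)" using wf by (simp add: wf_graph_def)
  have "preim G ?id B = B" if "B \<in> Pow (verts G)" for B using that by auto
  then have "(\<Prod>B\<in>Pow (verts G). n B ^ CC (induced G B))
      = (\<Prod>B\<in>Pow (verts G). n B ^ CC (induced G (preim G ?id B)))"
    by (intro prod.cong) simp_all
  also have "\<dots> = card (lifts G G n ?id)" by (rule card_lifts[OF wf id fin, symmetric])
  also have "\<dots> \<le> hom G (blow G n)"
    unfolding hom_def lifts_def using finite_Homs[OF fin finite_blow[OF fin]]
    by (intro card_mono) auto
  finally show ?thesis .
qed

lemma Homs_blow_project:
  assumes wfF: "wf_graph F" and \<chi>: "\<chi> \<in> Homs F (blow G n)"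
  shows "(\<lambda>a\<in>verts F. fst (\<chi> a)) \<in> Homs F G"
  unfolding Homs_def
proof (intro CollectI conjI ballI)
  have "fst (\<chi> a) \<in> verts G" if "a \<in> verts F" for a
    using PiE_mem[OF \<chi>[unfolded Homs_def, THEN CollectD, THEN conjunct1] that]
    by (auto simp: verts_blow)
  then show "(\<lambda>a\<in>verts F. fst (\<chi> a)) \<in> verts F \<rightarrow>\<^sub>E verts G"
    by (simp add: restrict_PiE_iff)
  fix e assume e: "e \<in> edges F"
  then obtain a b where ab: "e = (a, b)" "a \<in> verts F" "b \<in> verts F"
    using wfF by (auto simp: wf_graph_def)
  have "((fst (\<chi> a), snd (\<chi> a)), (fst (\<chi> b), snd (\<chi> b))) \<in> edges (blow G n)"
    using \<chi> e ab unfolding Homs_def by auto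
  then have "(fst (\<chi> a), fst (\<chi> b)) \<in> edges G" by (simp only: edges_blow)
  then show "case e of (a, b) \<Rightarrow> ((\<lambda>a\<in>verts F. fst (\<chi> a)) a, (\<lambda>a\<in>verts F. fst (\<chi> a)) b) \<in> edges G"
    using ab by simp
qed

(* Upper bound: every homomorphism F -> G^(n) lies over its projection F -> G. *)
lemma hom_blow_upper:
  assumes wfF: "wf_graph F" and wfG: "wf_graph G"
  shows "hom F (blow G n) \<le> (\<Sum>\<phi>\<in>Homs F G. \<Prod>B\<in>Pow (verts G). n B ^ CC (induced F (preim F \<phi> B)))"
proof -
  have finF: "finite (verts F)" and finG: "finite (verts G)"
    using wfF wfG by (simp_all add: wf_graph_def)
  have finH: "finite (Homs F G)" by (rule finite_Homs[OF finF finG])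
  have finL: "finite (lifts F G n \<phi>)" for \<phi>
    using finite_Homs[OF finF finite_blow[OF finG]] unfolding lifts_def by simp
  have "Homs F (blow G n) \<subseteq> (\<Union>\<phi>\<in>Homs F G. lifts F G n \<phi>)"
    using Homs_blow_project[OF wfF] unfolding lifts_def by fastforce
  then have "hom F (blow G n) \<le> card (\<Union>\<phi>\<in>Homs F G. lifts F G n \<phi>)"
    unfolding hom_def using finH finL by (intro card_mono) auto
  also have "\<dots> \<le> (\<Sum>\<phi>\<in>Homs F G. card (lifts F G n \<phi>))"
    by (rule card_UN_le[OF finH])
  also have "\<dots> = (\<Sum>\<phi>\<in>Homs F G. \<Prod>B\<in>Pow (verts G). n B ^ CC (induced F (preim F \<phi> B)))"
    using card_lifts[OF wfF _ finG] by (intro sum.cong) auto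
  finally show ?thesis .
qed

lemma linear_growth_bound:
  fixes c D L M :: real
  assumes "\<And>k::nat. c * (real k - D) \<le> L + real k * M"
  shows "c \<le> M"
proof (rule ccontr)
  assume "\<not> c \<le> M"
  then have gap: "c - M > 0" by simp
  obtain k :: nat where "(L + c * D) / (c - M) < real k" using reals_Archimedean2 by blast
  then have "L + c * D < real k * (c - M)" using gap by (simp add: divide_less_eq)
  moreover have "c * (real k - D) \<le> L + real k * M" by (rule assms)
  ultimately show False by (simp add: algebra_simps)
qed

lemma floor_weighted_sum_bounds:
  fixes q w :: "'x \<Rightarrow> real" and k :: real
  assumes "\<And>A. A \<in> S \<Longrightarrow> q A \<ge> 0" "\<And>A. A \<in> S \<Longrightarrow> w A \<ge> 0" "k \<ge> 0"
  shows "(\<Sum>A\<in>S. real (nat \<lfloor>k * q A\<rfloor>) * w A) \<le> k * (\<Sum>A\<in>S. q A * w A)"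
    and "k * (\<Sum>A\<in>S. q A * w A) - (\<Sum>A\<in>S. w A) \<le> (\<Sum>A\<in>S. real (nat \<lfloor>k * q A\<rfloor>) * w A)"
proof -
  have floor: "real (nat \<lfloor>k * q A\<rfloor>) \<le> k * q A" "k * q A - 1 \<le> real (nat \<lfloor>k * q A\<rfloor>)"
    if "A \<in> S" for A
  proof -
    have "real (nat \<lfloor>k * q A\<rfloor>) = real_of_int \<lfloor>k * q A\<rfloor>"
      using assms(1)[OF that] assms(3) by simp
    then show "real (nat \<lfloor>k * q A\<rfloor>) \<le> k * q A" "k * q A - 1 \<le> real (nat \<lfloor>k * q A\<rfloor>)"
      by linarith+
  qed
  have "(\<Sum>A\<in>S. real (nat \<lfloor>k * q A\<rfloor>) * w A) \<le> (\<Sum>A\<in>S. (k * q A) * w A)"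
    using floor(1) assms(2) by (intro sum_mono mult_right_mono) auto
  then show "(\<Sum>A\<in>S. real (nat \<lfloor>k * q A\<rfloor>) * w A) \<le> k * (\<Sum>A\<in>S. q A * w A)"
    by (simp add: sum_distrib_left mult.assoc)
  have "(\<Sum>A\<in>S. (k * q A - 1) * w A) \<le> (\<Sum>A\<in>S. real (nat \<lfloor>k * q A\<rfloor>) * w A)"
    using floor(2) assms(2) by (intro sum_mono mult_right_mono) auto
  then show "k * (\<Sum>A\<in>S. q A * w A) - (\<Sum>A\<in>S. w A) \<le> (\<Sum>A\<in>S. real (nat \<lfloor>k * q A\<rfloor>) * w A)"
    by (simp add: left_diff_distrib sum_subtractf sum_distrib_left mult.assoc)
qed

lemma prod_pow2_powr:
  "real (\<Prod>A\<in>S. ((2::nat) ^ m A) ^ e A) = 2 powr (\<Sum>A\<in>S. real (m A) * real (e A))"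
proof -
  have "(\<Prod>A\<in>S. ((2::nat) ^ m A) ^ e A) = 2 ^ (\<Sum>A\<in>S. m A * e A)"
    by (simp add: power_sum power_mult)
  then show ?thesis by (simp add: powr_realpow[symmetric])
qed

definition cost :: "('b set \<Rightarrow> real) \<Rightarrow> 'a graph \<Rightarrow> 'b graph \<Rightarrow> ('a \<Rightarrow> 'b) \<Rightarrow> real" where
  "cost q F G \<phi> = (\<Sum>A\<in>Pow (verts G). q A * real (CC (induced F (preim F \<phi> A))))"

definition blowup_sizes :: "('b set \<Rightarrow> real) \<Rightarrow> nat \<Rightarrow> 'b set \<Rightarrow> nat" where
  "blowup_sizes q k A = 2 ^ nat \<lfloor>real k * q A\<rfloor>"

lemma Qset_nonneg: "q \<in> Qset G \<Longrightarrow> A \<in> Pow (verts G) \<Longrightarrow> q A \<ge> 0"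
  by (simp add: Qset_def)

lemma hom_blowup_lower:
  assumes wfG: "wf_graph G" and q: "q \<in> Qset G"
  shows "2 powr (real k - (\<Sum>A\<in>Pow (verts G). real (CC (induced G A))))
    \<le> real (hom G (blow G (blowup_sizes q k)))"
proof -
  have "real k - (\<Sum>A\<in>Pow (verts G). real (CC (induced G A)))
      \<le> (\<Sum>A\<in>Pow (verts G). real (nat \<lfloor>real k * q A\<rfloor>) * real (CC (induced G A)))"
    using floor_weighted_sum_bounds(2)[of "Pow (verts G)" q "\<lambda>A. real (CC (induced G A))" "real k"]
      q Qset_nonneg[OF q] by (simp add: Qset_def)
  then have "2 powr (real k - (\<Sum>A\<in>Pow (verts G). real (CC (induced G A))))
      \<le> real (\<Prod>A\<in>Pow (verts G). blowup_sizes q k A ^ CC (induced G A))"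
    unfolding blowup_sizes_def prod_pow2_powr by simp
  also have "\<dots> \<le> real (hom G (blow G (blowup_sizes q k)))"
    using hom_blow_lower[OF wfG] by (simp only: of_nat_le_iff)
  finally show ?thesis .
qed

lemma hom_blowup_upper:
  assumes wfF: "wf_graph F" and wfG: "wf_graph G" and q: "q \<in> Qset G"
  shows "real (hom F (blow G (blowup_sizes q k)))
    \<le> real (card (Homs F G)) * 2 powr (real k * (MAX \<phi>\<in>Homs F G. cost q F G \<phi>))"
proof -
  have finH: "finite (Homs F G)" using wfF wfG by (intro finite_Homs) (simp_all add: wf_graph_def)
  have "real (hom F (blow G (blowup_sizes q k)))
      \<le> (\<Sum>\<phi>\<in>Homs F G. real (\<Prod>A\<in>Pow (verts G). blowup_sizes q k A ^ CC (induced F (preim F \<phi> A))))"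
    using hom_blow_upper[OF wfF wfG] by (simp only: of_nat_le_iff of_nat_sum[symmetric])
  also have "\<dots> \<le> (\<Sum>\<phi>\<in>Homs F G. 2 powr (real k * (MAX \<phi>\<in>Homs F G. cost q F G \<phi>)))"
  proof (rule sum_mono)
    fix \<phi> assume \<phi>: "\<phi> \<in> Homs F G"
    have "(\<Sum>A\<in>Pow (verts G). real (nat \<lfloor>real k * q A\<rfloor>) * real (CC (induced F (preim F \<phi> A))))
        \<le> real k * cost q F G \<phi>"
      unfolding cost_def
      using floor_weighted_sum_bounds(1)[of "Pow (verts G)" q] Qset_nonneg[OF q] by simp
    also have "\<dots> \<le> real k * (MAX \<phi>\<in>Homs F G. cost q F G \<phi>)"
      using finH \<phi> by (intro mult_left_mono) auto
    finally show "real (\<Prod>A\<in>Pow (verts G). blowup_sizes q k A ^ CC (induced F (preim F \<phi> A)))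
        \<le> 2 powr (real k * (MAX \<phi>\<in>Homs F G. cost q F G \<phi>))"
      unfolding blowup_sizes_def prod_pow2_powr by simp
  qed
  also have "\<dots> = real (card (Homs F G)) * 2 powr (real k * (MAX \<phi>\<in>Homs F G. cost q F G \<phi>))"
    by simp
  finally show ?thesis .
qed

lemma admissible_exponent_le_cost:
  fixes F :: "'a graph" and G :: "'b graph"
  assumes wfF: "wf_graph F" and wfG: "wf_graph G" and homs: "Homs F G \<noteq> {}"
    and q: "q \<in> Qset G"
    and adm: "\<forall>T :: nat graph. wf_graph T \<longrightarrow> real (hom F T) \<ge> real (hom G T) powr c"
  shows "c \<le> (MAX \<phi>\<in>Homs F G. cost q F G \<phi>)"
proof -
  let ?M = "MAX \<phi>\<in>Homs F G. cost q F G \<phi>"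
  let ?D = "\<Sum>A\<in>Pow (verts G). real (CC (induced G A))"
  have finH: "finite (Homs F G)" using wfF wfG by (intro finite_Homs) (simp_all add: wf_graph_def)
  obtain \<phi>0 where \<phi>0: "\<phi>0 \<in> Homs F G" using homs by blast
  have "0 \<le> cost q F G \<phi>0"
    unfolding cost_def using Qset_nonneg[OF q] by (intro sum_nonneg) simp
  also have "\<dots> \<le> ?M" using finH \<phi>0 by simp
  finally have M_nonneg: "0 \<le> ?M" .
  show ?thesis
  proof (cases "c \<le> 0")
    case True
    then show ?thesis using M_nonneg by linarith
  next
    case False
    have "c * (real k - ?D) \<le> log 2 (real (card (Homs F G))) + real k * ?M" for k
    proof -
      let ?T = "blow G (blowup_sizes q k)"
      have wfT: "wf_graph ?T" using wfG by (rule wf_blow) (simp add: blowup_sizes_def)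
      then obtain h :: "_ \<Rightarrow> nat" where h: "inj_on h (verts ?T)"
        using finite_imp_inj_to_nat_seg[of "verts ?T"] by (auto simp: wf_graph_def)
      have "2 powr (c * (real k - ?D)) = (2 powr (real k - ?D)) powr c"
        by (simp add: powr_powr mult.commute)
      also have "\<dots> \<le> real (hom G ?T) powr c"
        using hom_blowup_lower[OF wfG q] False by (intro powr_mono2) auto
      also have "\<dots> \<le> real (hom F ?T)"
        using adm wf_relabel[OF wfT, of h] hom_relabel[OF _ wfT h] wfF wfG by metis
      also have "\<dots> \<le> real (card (Homs F G)) * 2 powr (real k * ?M)"
        by (rule hom_blowup_upper[OF wfF wfG q])
      finally have "log 2 (2 powr (c * (real k - ?D)))
          \<le> log 2 (real (card (Homs F G)) * 2 powr (real k * ?M))"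
        by (intro log_mono) auto
      then show ?thesis
        using finH homs by (simp add: log_mult card_gt_0_iff)
    qed
    then show ?thesis by (rule linear_growth_bound)
  qed
qed

(* The exponent 0 is admissible, so the supremum defining HDE is over a nonempty set. *)
lemma zero_admissible:
  assumes wfF: "wf_graph F" and wfG: "wf_graph G" and FG: "hom F G \<ge> 1" and wfT: "wf_graph T"
  shows "real (hom F T) \<ge> real (hom G T) powr 0"
proof (cases "hom G T = 0")
  case False
  then obtain \<psi> where "\<psi> \<in> Homs G T" using hom_ge_1_iff[OF wfG wfT] by fastforce
  moreover obtain \<phi> where "\<phi> \<in> Homs F G" using hom_ge_1_iff[OF wfF wfG] FG by blast
  ultimately have "hom F T \<ge> 1" using Homs_comp[OF wfF] hom_ge_1_iff[OF wfF wfT] by blast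
  then show ?thesis by simp
qed simp

(* Q(G) is nonempty: put weight 1 on a single vertex. *)
lemma Qset_nonempty:
  assumes "wf_graph G" shows "Qset G \<noteq> {}"
proof -
  obtain v where v: "v \<in> verts G" using assms unfolding wf_graph_def by auto
  define q :: "'a set \<Rightarrow> real" where "q A = (if A = {v} then 1 else 0)" for A
  have "(\<Sum>A\<in>Pow (verts G). q A * real (CC (induced G A)))
      = (\<Sum>A\<in>Pow (verts G). if A = {v} then real (CC (induced G A)) else 0)"
    unfolding q_def by (rule sum.cong) auto
  also have "\<dots> = 1"
    using v assms by (simp add: sum.delta wf_graph_def CC_induced quotient_def)
  finally have "q \<in> Qset G" by (simp add: Qset_def q_def)
  then show ?thesis by blast
qed

theorem theorem3p2:
  fixes F :: "'a graph" and G :: "'b graph"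
  assumes "wf_graph F" and "wf_graph G" and "hom F G \<ge> 1"
  shows "HDE F G \<le>
    (INF q \<in> Qset G. MAX \<phi> \<in> Homs F G.
       \<Sum>A \<in> Pow (verts G). q A * real (CC (induced F {v \<in> verts F. \<phi> v \<in> A})))"
proof (rule cINF_greatest)
  show "Qset G \<noteq> {}" by (rule Qset_nonempty[OF assms(2)])
  fix q assume q: "q \<in> Qset G"
  have homs: "Homs F G \<noteq> {}" using hom_ge_1_iff assms by blast
  show "HDE F G \<le> (MAX \<phi> \<in> Homs F G.
       \<Sum>A \<in> Pow (verts G). q A * real (CC (induced F {v \<in> verts F. \<phi> v \<in> A})))"
    unfolding HDE_def
  proof (rule cSup_least)
    show "{c. \<forall>T :: nat graph. wf_graph T \<longrightarrow> real (hom F T) \<ge> real (hom G T) powr c} \<noteq> {}"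
      using zero_admissible[OF assms] by blast
  qed (use admissible_exponent_le_cost[OF assms(1,2) homs q] in \<open>simp add: cost_def\<close>)
qed

end
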